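(* Let $A$ be a local integral domain and let $\mathfrak{p}$ be a prime ideal of $A$ such that $A$ is straight at $\mathfrak{p}$. Then: (i) if $b\in\mathfrak{p}A_\mathfrak{p}$, then $b\in\mathfrak{p}A[b]$; (ii) $A$ is integrally closed in the ring $A+\mathfrak{p}A_\mathfrak{p}$.
   Context: All rings are commutative with identity. An overring of a domain $A$ is a ring $B$ with $A\subseteq B\subseteq \operatorname{Frac}(A)$. A domain $A$ is straight at a prime ideal $\mathfrak{p}$ if for every overring $B$ of $A$, the $(A/\mathfrak{p})$-module $B/\mathfrak{p}B$ is torsion-free. Here $A_\mathfrak{p}$ denotes the localization of $A$ at $\mathfrak{p}$, viewed inside $\operatorname{Frac}(A)$, and $A+\mathfrak{p}A_\mathfrak{p}$ is the subring of $\operatorname{Frac}(A)$ consisting of sums of an element of $A$ and an element of $\mathfrak{p}A_\mathfrak{p}$. *)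

theory Defs
  imports Main
begin

text \<open>Convention: the integral domain A is represented as a subring of a field type 'k
  which is its fraction field (every element of 'k is a quotient of elements of A).
  Overrings of A are then exactly the subrings of 'k containing A.\<close>

definition subring_of :: "'k::field set \<Rightarrow> bool" where
  "subring_of S \<longleftrightarrow> 0 \<in> S \<and> 1 \<in> S \<and> (\<forall>x\<in>S. \<forall>y\<in>S. x + y \<in> S \<and> x - y \<in> S \<and> x * y \<in> S)"

definition is_fraction_field_of :: "'k::field set \<Rightarrow> bool" where
  "is_fraction_field_of A \<longleftrightarrow> (\<forall>x. \<exists>a s. a \<in> A \<and> s \<in> A \<and> s \<noteq> 0 \<and> x = a / s)"

definition ideal_in :: "'k::field set \<Rightarrow> 'k set \<Rightarrow> bool" where
  "ideal_in I R \<longleftrightarrow> I \<subseteq> R \<and> 0 \<in> I \<and> (\<forall>x\<in>I. \<forall>y\<in>I. x + y \<in> I) \<and> (\<forall>r\<in>R. \<forall>x\<in>I. r * x \<in> I)"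

definition prime_ideal_in :: "'k::field set \<Rightarrow> 'k set \<Rightarrow> bool" where
  "prime_ideal_in P R \<longleftrightarrow> ideal_in P R \<and> 1 \<notin> P \<and>
     (\<forall>x\<in>R. \<forall>y\<in>R. x * y \<in> P \<longrightarrow> x \<in> P \<or> y \<in> P)"

definition maximal_ideal_in :: "'k::field set \<Rightarrow> 'k set \<Rightarrow> bool" where
  "maximal_ideal_in M R \<longleftrightarrow> ideal_in M R \<and> 1 \<notin> M \<and>
     (\<forall>J. ideal_in J R \<and> M \<subseteq> J \<longrightarrow> J = M \<or> 1 \<in> J)"

definition local_ring :: "'k::field set \<Rightarrow> bool" where
  "local_ring R \<longleftrightarrow> (\<exists>!M. maximal_ideal_in M R)"

definition ext_ideal :: "'k::field set \<Rightarrow> 'k set \<Rightarrow> 'k set" where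
  "ext_ideal I B = {\<Sum>i<n. a i * b i | (n::nat) a b. (\<forall>i<n. a i \<in> I \<and> b i \<in> B)}"

text \<open>A is straight at p: for every overring B, B/pB is a torsion-free A/p-module.\<close>
definition straight_at :: "'k::field set \<Rightarrow> 'k set \<Rightarrow> bool" where
  "straight_at A P \<longleftrightarrow> (\<forall>B. subring_of B \<and> A \<subseteq> B \<longrightarrow>
      (\<forall>a\<in>(A - P). \<forall>x\<in>B. a * x \<in> ext_ideal P B \<longrightarrow> x \<in> ext_ideal P B))"

definition adjoin :: "'k::field set \<Rightarrow> 'k \<Rightarrow> 'k set" where
  "adjoin A b = {\<Sum>i<n. a i * b ^ i | n a. \<forall>i<n. a i \<in> A}"

definition localization :: "'k::field set \<Rightarrow> 'k set \<Rightarrow> 'k set" where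
  "localization A P = {a / s | a s. a \<in> A \<and> s \<in> A \<and> s \<notin> P}"

definition loc_ideal :: "'k::field set \<Rightarrow> 'k set \<Rightarrow> 'k set" where
  "loc_ideal A P = {a / s | a s. a \<in> P \<and> s \<in> A \<and> s \<notin> P}"

definition set_plus :: "'k::field set \<Rightarrow> 'k set \<Rightarrow> 'k set" where
  "set_plus X Y = {x + y | x y. x \<in> X \<and> y \<in> Y}"

definition integral_over :: "'k::field set \<Rightarrow> 'k \<Rightarrow> bool" where
  "integral_over A x \<longleftrightarrow> (\<exists>n c. (\<forall>i<n. c i \<in> A) \<and> x ^ n + (\<Sum>i<n. c i * x ^ i) = 0)"

definition integrally_closed_in :: "'k::field set \<Rightarrow> 'k set \<Rightarrow> bool" where
  "integrally_closed_in A C \<longleftrightarrow> (\<forall>x\<in>C. integral_over A x \<longrightarrow> x \<in> A)"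

end

theory Submission
  imports Defs
begin

text \<open>For (i), write b = p / s with p in P and s in A - P: then s b = p lies in P A[b], and
  straightness at P cancels the factor s. For (ii), let x = a + y be integral over A with a in A and
  y in P A_P, and put T = A[x]. By the argument of (i) inside T, y lies in P T, so the subring A + P T
  contains x and therefore T = A + P T. Since x is integral, T is a finitely generated A-module, and
  since A is local, 1 - p is a unit for every p in P; Nakayama's lemma then gives T = A, so x lies in A.\<close>

lemma sum_lessThan_concat:
  fixes n m :: nat
  shows "(\<Sum>i<n. f i) + (\<Sum>i<m. g i) = (\<Sum>i<n + m. if i < n then f i else g (i - n))"
proof (induction m)
  case 0 then show ?case by (auto intro: sum.cong)
next
  case (Suc m) then show ?case by (simp flip: Suc.IH add: add.assoc)
qed

lemma subringD:
  assumes "subring_of A"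
  shows "0 \<in> A" "1 \<in> A" "x \<in> A \<Longrightarrow> y \<in> A \<Longrightarrow> x + y \<in> A"
    "x \<in> A \<Longrightarrow> y \<in> A \<Longrightarrow> x - y \<in> A" "x \<in> A \<Longrightarrow> y \<in> A \<Longrightarrow> x * y \<in> A"
  using assms unfolding subring_of_def by auto

lemma ideal_inD:
  assumes "ideal_in I R"
  shows "I \<subseteq> R" "0 \<in> I" "x \<in> I \<Longrightarrow> y \<in> I \<Longrightarrow> x + y \<in> I"
    "r \<in> R \<Longrightarrow> x \<in> I \<Longrightarrow> r * x \<in> I"
  using assms unfolding ideal_in_def by auto

definition module_over :: "'k::field set \<Rightarrow> 'k set \<Rightarrow> bool" where
  "module_over M A \<longleftrightarrow>
     0 \<in> M \<and> (\<forall>u\<in>M. \<forall>v\<in>M. u + v \<in> M) \<and> (\<forall>a\<in>A. \<forall>u\<in>M. a * u \<in> M)"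

lemma module_overD:
  assumes "module_over M A"
  shows "0 \<in> M" "u \<in> M \<Longrightarrow> v \<in> M \<Longrightarrow> u + v \<in> M"
    "a \<in> A \<Longrightarrow> u \<in> M \<Longrightarrow> a * u \<in> M"
  using assms unfolding module_over_def by auto

lemma module_over_sum:
  fixes n :: nat
  assumes "module_over M A" "\<And>i. i < n \<Longrightarrow> f i \<in> M"
  shows "(\<Sum>i<n. f i) \<in> M"
  using assms(2) by (induction n) (auto intro: module_overD[OF assms(1)])

lemma module_over_mult_preimage:
  "module_over M A \<Longrightarrow> module_over {v. c * v \<in> M} A"
  unfolding module_over_def by (simp add: distrib_left mult.left_commute)

lemma subring_module_over: "subring_of S \<Longrightarrow> A \<subseteq> S \<Longrightarrow> module_over S A"
  unfolding subring_of_def module_over_def by blast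

lemma ideal_module_over: "ideal_in I R \<Longrightarrow> module_over I R"
  unfolding ideal_in_def module_over_def by blast

definition adjoin_below :: "'k::field set \<Rightarrow> 'k \<Rightarrow> nat \<Rightarrow> 'k set" where
  "adjoin_below S x k = {\<Sum>i<k. c i * x ^ i | c. \<forall>i<k. c i \<in> S}"

lemma adjoin_belowI: "(\<And>i. i < k \<Longrightarrow> c i \<in> S) \<Longrightarrow> (\<Sum>i<k. c i * x ^ i) \<in> adjoin_below S x k"
  unfolding adjoin_below_def by blast

lemma adjoin_belowE:
  assumes "u \<in> adjoin_below S x k"
  obtains c where "u = (\<Sum>i<k. c i * x ^ i)" "\<And>i. i < k \<Longrightarrow> c i \<in> S"
  using assms that unfolding adjoin_below_def by auto

lemma adjoin_below_mono:
  assumes "S \<subseteq> S'" "k \<le> K" "0 \<in> S'"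
  shows "adjoin_below S x k \<subseteq> adjoin_below S' x K"
proof
  fix u assume "u \<in> adjoin_below S x k"
  then obtain c where u: "u = (\<Sum>i<k. c i * x ^ i)" and c: "\<And>i. i < k \<Longrightarrow> c i \<in> S"
    by (erule adjoin_belowE)
  have "u = (\<Sum>i<K. (if i < k then c i else 0) * x ^ i)"
    unfolding u by (rule sum.mono_neutral_cong_left) (use assms(2) in auto)
  also have "\<dots> \<in> adjoin_below S' x K"
    by (rule adjoin_belowI) (use c assms(1,3) in auto)
  finally show "u \<in> adjoin_below S' x K" .
qed

lemma adjoin_below_mult:
  assumes "u \<in> adjoin_below S x k" "\<And>s. s \<in> S \<Longrightarrow> r * s \<in> S'"
  shows "r * u \<in> adjoin_below S' x k"
proof -
  obtain c where u: "u = (\<Sum>i<k. c i * x ^ i)" and c: "\<And>i. i < k \<Longrightarrow> c i \<in> S"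
    using assms(1) by (erule adjoin_belowE)
  have "r * u = (\<Sum>i<k. (r * c i) * x ^ i)"
    unfolding u by (simp add: sum_distrib_left mult.assoc)
  also have "\<dots> \<in> adjoin_below S' x k" by (rule adjoin_belowI) (use c assms(2) in blast)
  finally show ?thesis .
qed

lemma module_over_adjoin_below:
  assumes S: "module_over S A"
  shows "module_over (adjoin_below S x k) A"
  unfolding module_over_def
proof (intro conjI ballI)
  show "0 \<in> adjoin_below S x k"
    using adjoin_belowI[of k "\<lambda>_. 0" S x] module_overD(1)[OF S] by simp
next
  fix u v assume "u \<in> adjoin_below S x k" "v \<in> adjoin_below S x k"
  obtain c where u: "u = (\<Sum>i<k. c i * x ^ i)" "\<And>i. i < k \<Longrightarrow> c i \<in> S"
    using \<open>u \<in> adjoin_below S x k\<close> by (erule adjoin_belowE)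
  obtain d where v: "v = (\<Sum>i<k. d i * x ^ i)" "\<And>i. i < k \<Longrightarrow> d i \<in> S"
    using \<open>v \<in> adjoin_below S x k\<close> by (erule adjoin_belowE)
  have "u + v = (\<Sum>i<k. (c i + d i) * x ^ i)"
    unfolding u(1) v(1) by (simp add: sum.distrib distrib_right)
  also have "\<dots> \<in> adjoin_below S x k"
    by (rule adjoin_belowI) (use u(2) v(2) module_overD(2)[OF S] in blast)
  finally show "u + v \<in> adjoin_below S x k" .
next
  fix a u assume "a \<in> A" "u \<in> adjoin_below S x k"
  then show "a * u \<in> adjoin_below S x k"
    using adjoin_below_mult module_overD(3)[OF S] by blast
qed

lemma monomial_in_adjoin_below:
  assumes "0 \<in> S" "a \<in> S" "j < k"
  shows "a * x ^ j \<in> adjoin_below S x k"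
proof -
  have "(\<Sum>i<k. (if i = j then a else 0) * x ^ i) = (\<Sum>i<k. if i = j then a * x ^ j else 0)"
    by (rule sum.cong) auto
  then have "a * x ^ j = (\<Sum>i<k. (if i = j then a else 0) * x ^ i)"
    using assms(3) by simp
  also have "\<dots> \<in> adjoin_below S x k" by (rule adjoin_belowI) (use assms(1,2) in auto)
  finally show ?thesis .
qed

lemma adjoin_below_Suc:
  assumes "u \<in> adjoin_below S x (Suc k)"
  obtains v c where "u = v + c * x ^ k" "v \<in> adjoin_below S x k" "c \<in> S"
proof -
  obtain c where u: "u = (\<Sum>i<Suc k. c i * x ^ i)" and c: "\<And>i. i < Suc k \<Longrightarrow> c i \<in> S"
    using assms by (erule adjoin_belowE)
  have "u = (\<Sum>i<k. c i * x ^ i) + c k * x ^ k" using u by simp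
  moreover have "(\<Sum>i<k. c i * x ^ i) \<in> adjoin_below S x k" by (rule adjoin_belowI) (use c in auto)
  ultimately show thesis using that c by blast
qed

lemma adjoin_below_one: "adjoin_below S x 1 \<subseteq> S"
  unfolding adjoin_below_def by auto

lemma adjoin_below_subset:
  assumes M: "module_over M A" and pow: "\<And>i. i < k \<Longrightarrow> x ^ i \<in> M"
  shows "adjoin_below A x k \<subseteq> M"
proof
  fix u assume "u \<in> adjoin_below A x k"
  then obtain c where u: "u = (\<Sum>i<k. c i * x ^ i)" and c: "\<And>i. i < k \<Longrightarrow> c i \<in> A"
    by (erule adjoin_belowE)
  show "u \<in> M" unfolding u by (rule module_over_sum[OF M]) (use c pow module_overD(3)[OF M] in blast)
qed

lemma adjoin_eq_Union_adjoin_below: "adjoin A x = (\<Union>k. adjoin_below A x k)"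
  unfolding adjoin_def adjoin_below_def by auto

lemma adjoin_subset:
  assumes "module_over M A" "\<And>i. x ^ i \<in> M"
  shows "adjoin A x \<subseteq> M"
proof
  fix u assume "u \<in> adjoin A x"
  then obtain k where "u \<in> adjoin_below A x k" unfolding adjoin_eq_Union_adjoin_below by blast
  then show "u \<in> M" using adjoin_below_subset[OF assms(1) assms(2)] by blast
qed

lemma module_over_adjoin:
  assumes A: "subring_of A"
  shows "module_over (adjoin A x) A"
proof -
  have MA: "module_over (adjoin_below A x k) A" for k
    by (rule module_over_adjoin_below[OF subring_module_over[OF A order_refl]])
  have "u + v \<in> adjoin A x" if uv: "u \<in> adjoin A x" "v \<in> adjoin A x" for u v
  proof -
    obtain k m where "u \<in> adjoin_below A x k" "v \<in> adjoin_below A x m"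
      using uv unfolding adjoin_eq_Union_adjoin_below by blast
    then have "u \<in> adjoin_below A x (k + m)" "v \<in> adjoin_below A x (k + m)"
      using adjoin_below_mono[of A A k "k + m" x] adjoin_below_mono[of A A m "k + m" x] subringD(1)[OF A]
      by auto
    then have "u + v \<in> adjoin_below A x (k + m)" by (rule module_overD(2)[OF MA])
    then show ?thesis unfolding adjoin_eq_Union_adjoin_below by blast
  qed
  moreover have "a * u \<in> adjoin A x" if a: "a \<in> A" and u: "u \<in> adjoin A x" for a u
  proof -
    obtain k where "u \<in> adjoin_below A x k" using u unfolding adjoin_eq_Union_adjoin_below by blast
    then have "a * u \<in> adjoin_below A x k" by (rule module_overD(3)[OF MA a])
    then show ?thesis unfolding adjoin_eq_Union_adjoin_below by blast
  qed
  moreover have "0 \<in> adjoin A x"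
    unfolding adjoin_eq_Union_adjoin_below using module_overD(1)[OF MA[of 0]] by blast
  ultimately show ?thesis unfolding module_over_def by blast
qed

lemma monomial_in_adjoin: "subring_of A \<Longrightarrow> a \<in> A \<Longrightarrow> a * x ^ j \<in> adjoin A x"
  unfolding adjoin_eq_Union_adjoin_below using monomial_in_adjoin_below[of A a j "Suc j" x] subringD(1)
  by blast

lemma power_in_adjoin: "subring_of A \<Longrightarrow> x ^ j \<in> adjoin A x"
  using monomial_in_adjoin[of A 1] subringD(2) by fastforce

lemma subset_adjoin: "subring_of A \<Longrightarrow> A \<subseteq> adjoin A x"
  using monomial_in_adjoin[of A _ x 0] by auto

lemma in_adjoin: "subring_of A \<Longrightarrow> x \<in> adjoin A x"
  using power_in_adjoin[of A x 1] by simp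

lemma adjoin_mult_closed:
  assumes A: "subring_of A" and u: "u \<in> adjoin A x" and v: "v \<in> adjoin A x"
  shows "u * v \<in> adjoin A x"
proof -
  have M: "module_over {w. c * w \<in> adjoin A x} A" for c
    by (rule module_over_mult_preimage[OF module_over_adjoin[OF A]])
  have "x ^ j * x ^ i \<in> adjoin A x" for i j
    using power_in_adjoin[OF A, of x "j + i"] by (simp add: power_add)
  then have "adjoin A x \<subseteq> {w. x ^ j * w \<in> adjoin A x}" for j
    using adjoin_subset[OF M] by blast
  then have "x ^ j \<in> {w. u * w \<in> adjoin A x}" for j
    using u by (simp add: subset_eq mult.commute)
  then have "adjoin A x \<subseteq> {w. u * w \<in> adjoin A x}"
    using adjoin_subset[OF M] by blast
  then show ?thesis using v by blast
qed

lemma subring_adjoin: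
  assumes A: "subring_of A"
  shows "subring_of (adjoin A x)"
  unfolding subring_of_def
proof (intro conjI ballI)
  note M = module_overD[OF module_over_adjoin[OF A]]
  show "0 \<in> adjoin A x" by (rule M(1))
  show "1 \<in> adjoin A x" using subset_adjoin[OF A] subringD(2)[OF A] by blast
  fix u v assume u: "u \<in> adjoin A x" and v: "v \<in> adjoin A x"
  show "u + v \<in> adjoin A x" by (rule M(2)[OF u v])
  have "- 1 \<in> A" using subringD(4)[OF A subringD(1,2)[OF A]] by simp
  then have "u + (- 1) * v \<in> adjoin A x" using M(2,3) u v by blast
  then show "u - v \<in> adjoin A x" by simp
  show "u * v \<in> adjoin A x" by (rule adjoin_mult_closed[OF A u v])
qed

lemma adjoin_subset_subring:
  assumes S: "subring_of S" and "A \<subseteq> S" "x \<in> S"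
  shows "adjoin A x \<subseteq> S"
proof (rule adjoin_subset[OF subring_module_over[OF S assms(2)]])
  show "x ^ i \<in> S" for i by (induction i) (use assms(3) subringD[OF S] in auto)
qed

lemma integral_adjoin_subset_adjoin_below:
  assumes A: "subring_of A" and "integral_over A x"
  obtains n where "0 < n" "adjoin A x \<subseteq> adjoin_below A x n"
proof -
  obtain n c where c: "\<And>i. i < n \<Longrightarrow> c i \<in> A" and eq: "x ^ n + (\<Sum>i<n. c i * x ^ i) = 0"
    using assms(2) unfolding integral_over_def by blast
  have n: "0 < n" using eq by (cases n) auto
  let ?M = "adjoin_below A x n"
  have M: "module_over ?M A" by (rule module_over_adjoin_below[OF subring_module_over[OF A order_refl]])
  have "x ^ n = (\<Sum>i<n. (- c i) * x ^ i)"
    using eq by (simp add: sum_negf eq_neg_iff_add_eq_0)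
  also have "\<dots> \<in> ?M" by (rule adjoin_belowI) (use c subringD(1,4)[OF A] in \<open>metis diff_0\<close>)
  finally have "x ^ n \<in> ?M" .
  then have low: "x ^ j \<in> ?M" if "j \<le> n" for j
    using monomial_in_adjoin_below[OF subringD(1,2)[OF A], of j n x] that
    by (cases "j = n") auto
  have "?M \<subseteq> {u. x * u \<in> ?M}"
    by (rule adjoin_below_subset[OF module_over_mult_preimage[OF M]]) (simp add: low flip: power_Suc)
  then have "x ^ j \<in> ?M" for j
    by (induction j) (use low[of 0] in auto)
  then show thesis using that n adjoin_subset[OF M] by blast
qed

lemma ext_idealE:
  assumes "y \<in> ext_ideal P B"
  obtains n p b where "y = (\<Sum>i<(n::nat). p i * b i)"
      "\<And>i. i < n \<Longrightarrow> p i \<in> P" "\<And>i. i < n \<Longrightarrow> b i \<in> B"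
  using assms unfolding ext_ideal_def by blast

lemma ext_idealI:
  fixes n :: nat
  shows "(\<And>i. i < n \<Longrightarrow> p i \<in> P) \<Longrightarrow> (\<And>i. i < n \<Longrightarrow> b i \<in> B) \<Longrightarrow>
    (\<Sum>i<n. p i * b i) \<in> ext_ideal P B"
  unfolding ext_ideal_def by blast

lemma subset_ext_ideal: "1 \<in> B \<Longrightarrow> P \<subseteq> ext_ideal P B"
  using ext_idealI[of 1 "\<lambda>_. _" P "\<lambda>_. 1" B] by auto

lemma ideal_ext_ideal:
  assumes B: "subring_of B" and PB: "P \<subseteq> B"
  shows "ideal_in (ext_ideal P B) B"
  unfolding ideal_in_def
proof (intro conjI ballI)
  show "ext_ideal P B \<subseteq> B"
  proof
    fix u assume "u \<in> ext_ideal P B"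
    then obtain n p b where u: "u = (\<Sum>i<(n::nat). p i * b i)"
        "\<And>i. i < n \<Longrightarrow> p i \<in> P" "\<And>i. i < n \<Longrightarrow> b i \<in> B"
      by (blast elim: ext_idealE)
    show "u \<in> B" unfolding u(1)
      by (rule module_over_sum[OF subring_module_over[OF B order_refl]])
        (use u(2,3) PB subringD(5)[OF B] in blast)
  qed
  show "0 \<in> ext_ideal P B" using ext_idealI[of 0] by simp
next
  fix u v assume "u \<in> ext_ideal P B" "v \<in> ext_ideal P B"
  obtain n p b where u: "u = (\<Sum>i<(n::nat). p i * b i)"
      "\<And>i. i < n \<Longrightarrow> p i \<in> P" "\<And>i. i < n \<Longrightarrow> b i \<in> B"
    using \<open>u \<in> ext_ideal P B\<close> by (blast elim: ext_idealE)
  obtain m q c where v: "v = (\<Sum>i<(m::nat). q i * c i)"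
      "\<And>i. i < m \<Longrightarrow> q i \<in> P" "\<And>i. i < m \<Longrightarrow> c i \<in> B"
    using \<open>v \<in> ext_ideal P B\<close> by (blast elim: ext_idealE)
  let ?p = "\<lambda>i. if i < n then p i else q (i - n)" and ?b = "\<lambda>i. if i < n then b i else c (i - n)"
  have "u + v = (\<Sum>i<n + m. ?p i * ?b i)"
    unfolding u(1) v(1) sum_lessThan_concat by (rule sum.cong) auto
  also have "\<dots> \<in> ext_ideal P B" by (rule ext_idealI) (use u(2,3) v(2,3) in auto)
  finally show "u + v \<in> ext_ideal P B" .
next
  fix r u assume r: "r \<in> B" and "u \<in> ext_ideal P B"
  then obtain n p b where u: "u = (\<Sum>i<(n::nat). p i * b i)"
      "\<And>i. i < n \<Longrightarrow> p i \<in> P" "\<And>i. i < n \<Longrightarrow> b i \<in> B"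
    by (blast elim: ext_idealE)
  have "r * u = (\<Sum>i<n. p i * (r * b i))"
    unfolding u(1) by (simp add: sum_distrib_left mult.left_commute)
  also have "\<dots> \<in> ext_ideal P B" by (rule ext_idealI) (use u(2,3) r subringD(5)[OF B] in auto)
  finally show "r * u \<in> ext_ideal P B" .
qed

lemma subring_set_plus_ideal:
  assumes T: "subring_of T" and AT: "A \<subseteq> T" and A: "subring_of A" and I: "ideal_in I T"
  shows "subring_of (set_plus A I)"
proof -
  note Tr = subringD[OF T] and Ar = subringD[OF A] and Ir = ideal_inD[OF I]
  have mem: "a + i \<in> set_plus A I" if "a \<in> A" "i \<in> I" for a i
    using that unfolding set_plus_def by blast
  have "- 1 \<in> T" using Tr(4)[OF Tr(1,2)] by simp
  then have Isub: "i - j \<in> I" if "i \<in> I" "j \<in> I" for i j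
    using Ir(3)[OF that(1) Ir(4)[of "- 1" j]] that(2) by simp
  have closed: "u + v \<in> set_plus A I \<and> u - v \<in> set_plus A I \<and> u * v \<in> set_plus A I"
    if uv: "u \<in> set_plus A I" "v \<in> set_plus A I" for u v
  proof -
    obtain a i b j where u: "u = a + i" "a \<in> A" "i \<in> I" and v: "v = b + j" "b \<in> A" "j \<in> I"
      using uv unfolding set_plus_def by blast
    have "a * j + b * i + i * j \<in> I"
      using Ir(3)[OF Ir(3)] Ir(4)[OF subsetD[OF AT u(2)] v(3)] Ir(4)[OF subsetD[OF AT v(2)] u(3)]
        Ir(4)[OF subsetD[OF Ir(1) u(3)] v(3)] by blast
    from mem[OF Ar(5)[OF u(2) v(2)] this]
    have "u * v \<in> set_plus A I" unfolding u(1) v(1) by (simp add: algebra_simps)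
    moreover from mem[OF Ar(3)[OF u(2) v(2)] Ir(3)[OF u(3) v(3)]]
    have "u + v \<in> set_plus A I" unfolding u(1) v(1) by (simp add: algebra_simps)
    moreover from mem[OF Ar(4)[OF u(2) v(2)] Isub[OF u(3) v(3)]]
    have "u - v \<in> set_plus A I" unfolding u(1) v(1) by (simp add: algebra_simps)
    ultimately show ?thesis by blast
  qed
  show ?thesis unfolding subring_of_def
    using mem[OF Ar(1) Ir(2)] mem[OF Ar(2) Ir(2)] closed by simp
qed

lemma straight_at_loc_ideal_in_ext_ideal:
  assumes St: "straight_at A P" and P: "ideal_in P A"
    and B: "subring_of B" "A \<subseteq> B" and b: "b \<in> B" "b \<in> loc_ideal A P"
  shows "b \<in> ext_ideal P B"
proof -
  obtain p s where bp: "b = p / s" "p \<in> P" "s \<in> A" "s \<notin> P"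
    using b(2) unfolding loc_ideal_def by blast
  have "s \<noteq> 0" using bp(4) ideal_inD(2)[OF P] by auto
  then have "s * b = p" using bp(1) by simp
  also have "p \<in> ext_ideal P B" using subset_ext_ideal[OF subringD(2)[OF B(1)]] bp(2) by blast
  finally have "s * b \<in> ext_ideal P B" .
  moreover have "\<forall>a\<in>A - P. \<forall>x\<in>B. a * x \<in> ext_ideal P B \<longrightarrow> x \<in> ext_ideal P B"
    using St B unfolding straight_at_def by blast
  ultimately show ?thesis using b(1) bp(3,4) by blast
qed

lemma ideal_in_Union_chain:
  assumes "C \<noteq> {}" "\<And>J. J \<in> C \<Longrightarrow> ideal_in J R"
    and "\<And>X Y. X \<in> C \<Longrightarrow> Y \<in> C \<Longrightarrow> X \<subseteq> Y \<or> Y \<subseteq> X"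
  shows "ideal_in (\<Union>C) R"
  unfolding ideal_in_def
proof (intro conjI ballI)
  show "\<Union>C \<subseteq> R" "0 \<in> \<Union>C" using assms(1,2) ideal_inD(1,2) by blast+
next
  fix u v assume "u \<in> \<Union>C" "v \<in> \<Union>C"
  then obtain X Y where XY: "X \<in> C" "Y \<in> C" "u \<in> X" "v \<in> Y" by blast
  with assms(3) consider "u \<in> Y" | "v \<in> X" by blast
  then show "u + v \<in> \<Union>C" using XY ideal_inD(3)[OF assms(2)] by cases blast+
next
  fix r u assume "r \<in> R" "u \<in> \<Union>C"
  then show "r * u \<in> \<Union>C" using assms(2) ideal_inD(4) by blast
qed

lemma ideal_subset_maximal_ideal:
  assumes "ideal_in I R" "1 \<notin> I"
  obtains M where "maximal_ideal_in M R" "I \<subseteq> M"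
proof -
  let ?F = "{J. ideal_in J R \<and> I \<subseteq> J \<and> 1 \<notin> J}"
  have "\<exists>M\<in>?F. \<forall>X\<in>?F. M \<subseteq> X \<longrightarrow> X = M"
  proof (rule subset_Zorn_nonempty)
    show "?F \<noteq> {}" using assms by blast
  next
    fix C assume C: "C \<noteq> {}" "subset.chain ?F C"
    then have "ideal_in (\<Union>C) R"
      by (intro ideal_in_Union_chain) (auto simp: subset.chain_def)
    then show "\<Union>C \<in> ?F" using C by (auto simp: subset.chain_def)
  qed
  then obtain M where "M \<in> ?F" "\<forall>X\<in>?F. M \<subseteq> X \<longrightarrow> X = M" by blast
  then have "maximal_ideal_in M R" "I \<subseteq> M"
    unfolding maximal_ideal_in_def by blast+
  then show thesis by (rule that)
qed

lemma principal_ideal_in: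
  assumes A: "subring_of A" and "u \<in> A"
  shows "ideal_in {u * r | r. r \<in> A} A"
  unfolding ideal_in_def
proof (intro conjI ballI)
  show "{u * r |r. r \<in> A} \<subseteq> A" using subringD(5)[OF A] assms(2) by blast
  show "0 \<in> {u * r |r. r \<in> A}" using subringD(1)[OF A] by force
next
  fix v w assume "v \<in> {u * r |r. r \<in> A}" "w \<in> {u * r |r. r \<in> A}"
  then obtain r s where "v = u * r" "w = u * s" "r \<in> A" "s \<in> A" by blast
  then have "v + w = u * (r + s)" "r + s \<in> A" using subringD(3)[OF A] by (auto simp: distrib_left)
  then show "v + w \<in> {u * r |r. r \<in> A}" by blast
next
  fix t v assume "t \<in> A" "v \<in> {u * r |r. r \<in> A}"
  then obtain r where "v = u * r" "r \<in> A" by blast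
  then have "t * v = u * (t * r)" "t * r \<in> A" using subringD(5)[OF A] \<open>t \<in> A\<close>
    by (auto simp: mult.left_commute)
  then show "t * v \<in> {u * r |r. r \<in> A}" by blast
qed

lemma local_ring_one_minus_unit:
  assumes A: "subring_of A" and L: "local_ring A" and P: "ideal_in P A" "1 \<notin> P" and q: "q \<in> P"
  shows "\<exists>v\<in>A. v * (1 - q) = 1"
proof (rule ccontr)
  assume no_inverse: "\<not> ?thesis"
  let ?I = "{(1 - q) * r | r. r \<in> A}"
  have "1 - q \<in> A" using subringD(2,4)[OF A] ideal_inD(1)[OF P(1)] q by blast
  then have I: "ideal_in ?I A" by (rule principal_ideal_in[OF A])
  have "1 \<notin> ?I" using no_inverse by (auto simp: mult.commute)
  then obtain M where M: "maximal_ideal_in M A" "?I \<subseteq> M"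
    using ideal_subset_maximal_ideal[OF I] by blast
  obtain M' where M': "maximal_ideal_in M' A" "P \<subseteq> M'"
    using ideal_subset_maximal_ideal[OF P] by blast
  have "M' = M" using L M(1) M'(1) unfolding local_ring_def by (metis Uniq_def Uniq_I)
  have "1 - q \<in> M" using M(2) subringD(2)[OF A] by force
  moreover have "q \<in> M" using M'(2) q \<open>M' = M\<close> by blast
  moreover have "ideal_in M A" "1 \<notin> M" using M(1) unfolding maximal_ideal_in_def by blast+
  ultimately show False using ideal_inD(3)[of M A "1 - q" q] by simp
qed

lemma adjoin_subset_adjoin_below_reduce:
  assumes A: "subring_of A" and P: "ideal_in P A" and units: "\<And>p. p \<in> P \<Longrightarrow> \<exists>v\<in>A. v * (1 - p) = 1"
    and T: "adjoin A x \<subseteq> adjoin_below A x (Suc k)" and k: "0 < k"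
    and cover: "adjoin A x \<subseteq> set_plus A (ext_ideal P (adjoin A x))"
  shows "adjoin A x \<subseteq> adjoin_below A x k"
proof -
  note Ar = subringD[OF A] and Pr = ideal_inD[OF P]
  have MA: "module_over (adjoin_below A x k) A"
    by (rule module_over_adjoin_below[OF subring_module_over[OF A order_refl]])
  have MP: "module_over (adjoin_below P x (Suc k)) A"
    by (rule module_over_adjoin_below[OF ideal_module_over[OF P]])
  have ext: "ext_ideal P (adjoin A x) \<subseteq> adjoin_below P x (Suc k)"
  proof
    fix y assume "y \<in> ext_ideal P (adjoin A x)"
    then obtain n p t where y: "y = (\<Sum>i<(n::nat). p i * t i)" "\<And>i. i < n \<Longrightarrow> p i \<in> P"
      "\<And>i. i < n \<Longrightarrow> t i \<in> adjoin A x"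
      by (blast elim: ext_idealE)
    have "p i * t i \<in> adjoin_below P x (Suc k)" if "i < n" for i
      by (rule adjoin_below_mult[of _ A]) (use T y(2,3) Pr(4) that in \<open>auto simp: mult.commute\<close>)
    then show "y \<in> adjoin_below P x (Suc k)" unfolding y(1) by (rule module_over_sum[OF MP])
  qed
  obtain a q where aq: "x ^ k = a + q" "a \<in> A" "q \<in> adjoin_below P x (Suc k)"
    using cover power_in_adjoin[OF A] ext unfolding set_plus_def by blast
  \<comment> \<open>Splitting off the top coefficient p of q, (1 - p) x^k = a + q' involves only lower powers,
    and 1 - p is a unit.\<close>
  obtain q' p where q': "q = q' + p * x ^ k" "q' \<in> adjoin_below P x k" "p \<in> P"
    using aq(3) by (erule adjoin_below_Suc)
  obtain v where v: "v \<in> A" "v * (1 - p) = 1" using units[OF q'(3)] by blast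
  have "a + q' \<in> adjoin_below A x k"
  proof (rule module_overD(2)[OF MA])
    show "a \<in> adjoin_below A x k" using monomial_in_adjoin_below[OF Ar(1) aq(2) k, of x] by simp
    show "q' \<in> adjoin_below A x k" using adjoin_below_mono[OF Pr(1) order_refl Ar(1)] q'(2) by blast
  qed
  moreover have "x ^ k = v * (a + q')"
  proof -
    have "(1 - p) * x ^ k = a + q'" using aq(1) q'(1) by (simp add: algebra_simps)
    then show ?thesis using v(2) by (metis mult.assoc mult_1)
  qed
  ultimately have xk: "x ^ k \<in> adjoin_below A x k" using module_overD(3)[OF MA v(1)] by simp
  have "adjoin_below A x (Suc k) \<subseteq> adjoin_below A x k"
  proof (rule adjoin_below_subset[OF MA])
    fix i assume "i < Suc k"
    then show "x ^ i \<in> adjoin_below A x k"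
      using xk monomial_in_adjoin_below[OF Ar(1,2), of i k x] by (cases "i = k") auto
  qed
  then show ?thesis using T by blast
qed

lemma nakayama_adjoin:
  assumes A: "subring_of A" and P: "ideal_in P A" and units: "\<And>p. p \<in> P \<Longrightarrow> \<exists>v\<in>A. v * (1 - p) = 1"
    and x: "integral_over A x" and cover: "adjoin A x \<subseteq> set_plus A (ext_ideal P (adjoin A x))"
  shows "x \<in> A"
proof -
  obtain n where "0 < n" "adjoin A x \<subseteq> adjoin_below A x n"
    using integral_adjoin_subset_adjoin_below[OF A x] by blast
  then have "adjoin A x \<subseteq> adjoin_below A x 1"
  proof (induction n rule: nat_induct_non_zero)
    case (Suc n)
    then show ?case using adjoin_subset_adjoin_below_reduce[OF A P units _ _ cover] by blast
  qed
  then show ?thesis using in_adjoin[OF A] adjoin_below_one by blast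
qed

lemma integrally_closed_in_set_plus_loc_ideal:
  assumes A: "subring_of A" and L: "local_ring A" and P: "prime_ideal_in P A" and St: "straight_at A P"
  shows "integrally_closed_in A (set_plus A (loc_ideal A P))"
  unfolding integrally_closed_in_def
proof (intro ballI impI)
  fix x assume "x \<in> set_plus A (loc_ideal A P)" and x: "integral_over A x"
  then obtain a y where xy: "x = a + y" "a \<in> A" "y \<in> loc_ideal A P" unfolding set_plus_def by blast
  let ?T = "adjoin A x"
  have PA: "ideal_in P A" "1 \<notin> P" using P unfolding prime_ideal_in_def by blast+
  have T: "subring_of ?T" "A \<subseteq> ?T" "x \<in> ?T" using subring_adjoin subset_adjoin in_adjoin A by blast+
  have "y \<in> ?T" using subringD(4)[OF T(1) T(3)] T(2) xy(1,2) by force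
  then have "y \<in> ext_ideal P ?T" using straight_at_loc_ideal_in_ext_ideal[OF St PA(1) T(1,2)] xy(3) by blast
  then have "x \<in> set_plus A (ext_ideal P ?T)" using xy(1,2) unfolding set_plus_def by blast
  moreover have I: "ideal_in (ext_ideal P ?T) ?T"
    using ideal_ext_ideal[OF T(1)] ideal_inD(1)[OF PA(1)] T(2) by blast
  moreover have "A \<subseteq> set_plus A (ext_ideal P ?T)"
    using ideal_inD(2)[OF I] unfolding set_plus_def by force
  ultimately have "?T \<subseteq> set_plus A (ext_ideal P ?T)"
    using adjoin_subset_subring subring_set_plus_ideal[OF T(1,2) A] by blast
  then show "x \<in> A"
    using nakayama_adjoin[OF A PA(1) local_ring_one_minus_unit[OF A L PA] x] by blast
qed

theorem lemma2p2:
  fixes A P :: "'k::field set"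
  assumes "subring_of A"
    and "is_fraction_field_of A"
    and "local_ring A"
    and "prime_ideal_in P A"
    and "straight_at A P"
  shows "(\<forall>b\<in>loc_ideal A P. b \<in> ext_ideal P (adjoin A b))
         \<and> integrally_closed_in A (set_plus A (loc_ideal A P))"
proof
  have "ideal_in P A" using assms(4) unfolding prime_ideal_in_def by blast
  then show "\<forall>b\<in>loc_ideal A P. b \<in> ext_ideal P (adjoin A b)"
    using straight_at_loc_ideal_in_ext_ideal[OF assms(5)] subring_adjoin subset_adjoin in_adjoin assms(1)
    by blast
  show "integrally_closed_in A (set_plus A (loc_ideal A P))"
    using integrally_closed_in_set_plus_loc_ideal[OF assms(1,3,4,5)] .
qed

end
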